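(* Let $C$ be a linear code over $\mathbb{Z}_4+u\mathbb{Z}_4$ of length $n$ and let $C^{\perp}$ be its dual. Then $$swe_{C^{\perp}}(X,Y,Z,W,S)=\frac{1}{|C|}\,swe_C\big(6S+4W+X+Y+4Z,\ 6S-4W+X+Y-4Z,\ -2W+X-Y+2Z,\ 2W+X-Y-2Z,\ -2S+X+Y\big).$$
   Context: $\mathbb{Z}_4+u\mathbb{Z}_4$ is the commutative ring of characteristic $4$ with $u^2=0$. A linear code of length $n$ is a submodule of $(\mathbb{Z}_4+u\mathbb{Z}_4)^n$; its dual $C^\perp$ is taken with respect to the Euclidean inner product $\sum_i x_iy_i$ computed in the ring. For a codeword $c$, let $n_0(c)$ be the number of coordinates equal to $0$, $n_4(c)$ the number equal to $2u$, $n_3(c)$ the number in $\{1+u,1+2u,3+2u,3+3u\}$, $n_1(c)$ the number in $\{1,1+3u,3,3+u\}$, and $n_2(c)$ the number in $\{2,u,3u,2+u,2+2u,2+3u\}$. The symmetrized weight enumerator is $swe_C(X,Y,Z,W,S)=\sum_{c\in C}X^{n_0(c)}Y^{n_4(c)}Z^{n_3(c)}W^{n_1(c)}S^{n_2(c)}$. *)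

theory Defs
  imports Complex_Main "HOL-Library.Numeral_Type"
begin

text \<open>The ring Z4 + u Z4 (u^2 = 0): the element a + b u is represented by the pair (a, b)
  with a, b in Z4 (the type 4 from HOL-Library.Numeral_Type).\<close>

type_synonym R = "4 \<times> 4"

definition radd :: "R \<Rightarrow> R \<Rightarrow> R" where
  "radd x y = (fst x + fst y, snd x + snd y)"

definition rmul :: "R \<Rightarrow> R \<Rightarrow> R" where
  "rmul x y = (fst x * fst y, fst x * snd y + snd x * fst y)"

definition rzero :: R where "rzero = (0, 0)"

definition vadd :: "R list \<Rightarrow> R list \<Rightarrow> R list" where
  "vadd x y = map2 radd x y"

definition smul :: "R \<Rightarrow> R list \<Rightarrow> R list" where
  "smul r x = map (rmul r) x"

definition inner :: "R list \<Rightarrow> R list \<Rightarrow> R" where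
  "inner x y = foldr radd (map2 rmul x y) rzero"

definition space :: "nat \<Rightarrow> R list set" where
  "space n = {x. length x = n}"

definition linear_code :: "nat \<Rightarrow> R list set \<Rightarrow> bool" where
  "linear_code n C \<longleftrightarrow> C \<subseteq> space n \<and> replicate n rzero \<in> C
     \<and> (\<forall>x\<in>C. \<forall>y\<in>C. vadd x y \<in> C) \<and> (\<forall>r. \<forall>x\<in>C. smul r x \<in> C)"

definition dual_code :: "nat \<Rightarrow> R list set \<Rightarrow> R list set" where
  "dual_code n C = {y \<in> space n. \<forall>x\<in>C. inner x y = rzero}"

definition cls0 :: "R set" where "cls0 = {(0,0)}"
definition cls4 :: "R set" where "cls4 = {(0,2)}"
definition cls3 :: "R set" where "cls3 = {(1,1),(1,2),(3,2),(3,3)}"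
definition cls1 :: "R set" where "cls1 = {(1,0),(1,3),(3,0),(3,1)}"
definition cls2 :: "R set" where "cls2 = {(2,0),(0,1),(0,3),(2,1),(2,2),(2,3)}"

definition cnt :: "R set \<Rightarrow> R list \<Rightarrow> nat" where
  "cnt A c = length (filter (\<lambda>a. a \<in> A) c)"

definition swe :: "R list set \<Rightarrow> 'a::comm_ring_1 \<Rightarrow> 'a \<Rightarrow> 'a \<Rightarrow> 'a \<Rightarrow> 'a \<Rightarrow> 'a" where
  "swe C X Y Z W S = (\<Sum>c\<in>C. X ^ cnt cls0 c * Y ^ cnt cls4 c * Z ^ cnt cls3 c
        * W ^ cnt cls1 c * S ^ cnt cls2 c)"

end

theory Submission
  imports Defs
begin

text \<open>The proof is the MacWilliams argument with the character \<open>\<chi>(a + b u) = i^(a+b)\<close>.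
  Every nonzero ideal of \<open>\<int>\<^sub>4 + u\<int>\<^sub>4\<close> contains \<open>2u\<close> and \<open>\<chi>(2u) = -1\<close>, so \<open>\<chi>\<close> is
  nontrivial on every nonzero ideal; hence \<open>\<Sum>\<^sub>x\<^sub>\<in>\<^sub>C \<chi>(\<langle>x,y\<rangle>)\<close> is \<open>|C|\<close> for \<open>y \<in> C\<^sup>\<bottom>\<close> and \<open>0\<close>
  otherwise. Summing a product weight over \<open>C\<^sup>\<bottom>\<close> thus becomes \<open>1/|C|\<close> times a sum over \<open>C\<close>
  of coordinatewise Fourier transforms, and the Fourier transform of the weight attached to the
  five classes is again such a weight, in the transformed variables.\<close>

lemma four_cases: "(x::4) = 0 \<or> x = 1 \<or> x = 2 \<or> x = 3"
proof (induct x)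
  case (of_int z)
  then have "z < 4" by simp
  then have "z = 0 \<or> z = 1 \<or> z = 2 \<or> z = 3" using of_int by arith
  then show ?case by auto
qed

lemma UNIV_4: "(UNIV::4 set) = {0,1,2,3}"
  using four_cases by auto

lemma ex_4: "(\<exists>x::4. P x) \<longleftrightarrow> P 0 \<or> P 1 \<or> P 2 \<or> P 3"
  using four_cases by metis

lemma UNIV_R: "(UNIV::R set) = {0,1,2,3} \<times> {0,1,2,3}"
  by (metis UNIV_4 UNIV_Times_UNIV)

lemma rmul_radd_left: "rmul (radd a c) b = radd (rmul a b) (rmul c b)"
  by (simp add: rmul_def radd_def algebra_simps)

lemma rmul_radd_right: "rmul r (radd a b) = radd (rmul r a) (rmul r b)"
  by (simp add: rmul_def radd_def algebra_simps)

lemma rmul_assoc: "rmul (rmul r a) b = rmul r (rmul a b)"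
  by (simp add: rmul_def algebra_simps)

lemma rmul_rzero: "rmul r rzero = rzero"
  by (simp add: rmul_def rzero_def)

lemma ex_rmul_eq_2u:
  assumes "a \<noteq> rzero"
  shows "\<exists>r. rmul r a = (0, 2)"
proof -
  obtain a1 a2 where a: "a = (a1, a2)" by fastforce
  have "\<exists>r1 r2. rmul (r1, r2) (a1, a2) = (0, 2)"
    using assms four_cases[of a1] four_cases[of a2]
    by (elim disjE) (simp_all add: a rzero_def rmul_def ex_4)
  then show ?thesis using a by auto
qed

definition i_pow :: "4 \<Rightarrow> complex" where
  "i_pow k = (if k = 0 then 1 else if k = 1 then \<i> else if k = 2 then -1 else -\<i>)"

lemma i_pow_add: "i_pow (a + b) = i_pow a * i_pow b"
  using four_cases[of a] four_cases[of b] by (auto simp: i_pow_def)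

definition chi :: "R \<Rightarrow> complex" where
  "chi x = i_pow (fst x + snd x)"

lemma chi_radd: "chi (radd x y) = chi x * chi y"
  by (simp add: chi_def radd_def i_pow_add[symmetric] algebra_simps)

lemma chi_rzero: "chi rzero = 1"
  by (simp add: chi_def rzero_def i_pow_def)

lemma chi_2u: "chi (0, 2) = -1"
  by (simp add: chi_def i_pow_def)

definition swe_weight :: "'a \<Rightarrow> 'a \<Rightarrow> 'a \<Rightarrow> 'a \<Rightarrow> 'a \<Rightarrow> R \<Rightarrow> 'a" where
  "swe_weight X Y Z W S r =
    (if r \<in> cls0 then X else if r \<in> cls4 then Y else if r \<in> cls3 then Z
     else if r \<in> cls1 then W else S)"

lemma prod_list_swe_weight:
  "(\<Prod>r\<leftarrow>c. swe_weight X Y Z W S r) =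
    (X::'a::comm_ring_1) ^ cnt cls0 c * Y ^ cnt cls4 c * Z ^ cnt cls3 c * W ^ cnt cls1 c * S ^ cnt cls2 c"
proof (induct c)
  case Nil
  then show ?case by (simp add: cnt_def)
next
  case (Cons a c)
  obtain a1 a2 where a: "a = (a1, a2)" by fastforce
  show ?case
    using four_cases[of a1] four_cases[of a2] Cons
    by (elim disjE; simp add: a cnt_def cls0_def cls1_def cls2_def cls3_def cls4_def
        swe_weight_def mult_ac)
qed

lemma swe_eq_sum_prod_list: "swe C X Y Z W S = (\<Sum>c\<in>C. \<Prod>r\<leftarrow>c. swe_weight X Y Z W S r)"
  by (simp add: swe_def prod_list_swe_weight)

lemma of_real_swe:
  "of_real (swe C X Y Z W S) = swe C (of_real X) (of_real Y) (of_real Z) (of_real W) (of_real S)"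
  by (simp add: swe_def)

lemma sum_chi_mult_swe_weight:
  "(\<Sum>r\<in>UNIV. chi (rmul a r) * swe_weight X Y Z W S r) =
    swe_weight (6*S + 4*W + X + Y + 4*Z) (6*S - 4*W + X + Y - 4*Z)
      (-2*W + X - Y + 2*Z) (2*W + X - Y - 2*Z) (-2*S + X + Y) a"
proof -
  obtain a1 a2 where a: "a = (a1, a2)" by fastforce
  show ?thesis
    unfolding UNIV_R a
    using four_cases[of a1] four_cases[of a2]
    by (elim disjE; simp add: sum.cartesian_product[symmetric] rmul_def chi_def i_pow_def
        swe_weight_def cls0_def cls1_def cls2_def cls3_def cls4_def; algebra)
qed

lemma inner_Cons: "inner (a # x) (b # y) = radd (rmul a b) (inner x y)"
  by (simp add: inner_def)

lemma inner_vadd_left: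
  "length x = length y \<Longrightarrow> length x' = length y \<Longrightarrow>
    inner (vadd x x') y = radd (inner x y) (inner x' y)"
proof (induct x arbitrary: x' y)
  case Nil
  then show ?case by (simp add: vadd_def inner_def radd_def rzero_def)
next
  case (Cons a x)
  then obtain b y' c x'' where "y = b # y'" "x' = c # x''"
    by (metis length_Suc_conv)
  with Cons show ?case
    by (simp add: vadd_def inner_Cons rmul_radd_left) (simp add: radd_def algebra_simps)
qed

lemma inner_smul_left: "length x = length y \<Longrightarrow> inner (smul r x) y = rmul r (inner x y)"
proof (induct x arbitrary: y)
  case Nil
  then show ?case by (simp add: smul_def inner_def rmul_rzero)
next
  case (Cons a x)
  then obtain b y' where "y = b # y'" by (cases y) auto
  with Cons show ?case by (simp add: smul_def inner_Cons rmul_radd_right rmul_assoc)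
qed

lemma chi_inner_eq_prod_list:
  "length x = length y \<Longrightarrow> chi (inner x y) = (\<Prod>(a, b)\<leftarrow>zip x y. chi (rmul a b))"
proof (induct x arbitrary: y)
  case Nil
  then show ?case by (simp add: inner_def chi_rzero)
next
  case (Cons a x)
  then obtain b y' where "y = b # y'" by (cases y) auto
  with Cons show ?case by (simp add: inner_Cons chi_radd)
qed

lemma sum_length_lists_prod_list_zip:
  fixes F :: "'a \<Rightarrow> 'b::finite \<Rightarrow> 'c::comm_semiring_1"
  shows "(\<Sum>ys | length ys = length xs. \<Prod>(x, y)\<leftarrow>zip xs ys. F x y) =
    (\<Prod>x\<leftarrow>xs. \<Sum>y\<in>UNIV. F x y)"
proof (induct xs)
  case Nil
  then show ?case by simp
next
  case (Cons x xs)
  let ?L = "{ys. length ys = length xs}"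
  have lists_Suc: "{ys. length ys = length (x # xs)} = (\<lambda>(y, ys). y # ys) ` (UNIV \<times> ?L)"
    by (auto simp: image_iff length_Suc_conv)
  have inj: "inj_on (\<lambda>(y, ys). y # ys) (UNIV \<times> ?L)"
    by (rule inj_onI) auto
  have "(\<Sum>ys | length ys = length (x # xs). \<Prod>(a, b)\<leftarrow>zip (x # xs) ys. F a b) =
      (\<Sum>(y, ys)\<in>UNIV \<times> ?L. F x y * (\<Prod>(a, b)\<leftarrow>zip xs ys. F a b))"
    unfolding lists_Suc sum.reindex[OF inj] by (simp add: case_prod_unfold)
  also have "\<dots> = (\<Sum>y\<in>UNIV. F x y) * (\<Sum>ys\<in>?L. \<Prod>(a, b)\<leftarrow>zip xs ys. F a b)"
    by (simp add: sum_product sum.cartesian_product)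
  finally show ?case using Cons by simp
qed

lemma finite_space: "finite (space n)"
  using finite_lists_length_eq[of "UNIV::R set" n] by (simp add: space_def)

lemma linear_code_finite: "linear_code n C \<Longrightarrow> finite C"
  using finite_space finite_subset by (auto simp: linear_code_def)

lemma vadd_left_cancel:
  assumes "length x = length x0" "length x' = length x0" "vadd x0 x = vadd x0 x'"
  shows "x = x'"
proof (rule nth_equalityI)
  show "length x = length x'" using assms by simp
  fix i assume "i < length x"
  moreover have "vadd x0 x ! i = vadd x0 x' ! i" using assms(3) by simp
  ultimately have "radd (x0 ! i) (x ! i) = radd (x0 ! i) (x' ! i)"
    using assms by (simp add: vadd_def)
  then show "x ! i = x' ! i" by (simp add: radd_def prod_eq_iff)
qed

text \<open>Translating \<open>C\<close> by a codeword \<open>x\<^sub>0\<close> with \<open>\<chi>(\<langle>x\<^sub>0,y\<rangle>) = -1\<close> negates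
  the sum; such an \<open>x\<^sub>0\<close> is a multiple of any \<open>x\<^sub>1\<close> with \<open>\<langle>x\<^sub>1,y\<rangle> \<noteq> 0\<close> by \<open>ex_rmul_eq_2u\<close>.\<close>

lemma sum_chi_inner_code:
  assumes C: "linear_code n C" and y: "y \<in> space n"
  shows "(\<Sum>x\<in>C. chi (inner x y)) = (if y \<in> dual_code n C then of_nat (card C) else 0)"
proof (cases "y \<in> dual_code n C")
  case True
  then show ?thesis by (simp add: dual_code_def chi_rzero)
next
  case False
  have len: "length x = n" if "x \<in> C" for x
    using C that by (auto simp: linear_code_def space_def)
  have ly: "length y = n" using y by (simp add: space_def)
  obtain x1 where x1: "x1 \<in> C" "inner x1 y \<noteq> rzero"
    using False y by (auto simp: dual_code_def)
  obtain r where r: "rmul r (inner x1 y) = (0, 2)"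
    using ex_rmul_eq_2u[OF x1(2)] by blast
  define x0 where "x0 = smul r x1"
  have x0: "x0 \<in> C" using C x1(1) unfolding linear_code_def x0_def by blast
  have chi_x0: "chi (inner x0 y) = -1"
    using r len[OF x1(1)] ly by (simp add: x0_def inner_smul_left chi_2u)
  have inj: "inj_on (vadd x0) C"
    by (rule inj_onI) (metis vadd_left_cancel len x0)
  have "vadd x0 ` C = C"
    by (rule endo_inj_surj[OF linear_code_finite[OF C] _ inj]) (use C x0 in \<open>auto simp: linear_code_def\<close>)
  then have "(\<Sum>x\<in>C. chi (inner x y)) = (\<Sum>x\<in>C. chi (inner (vadd x0 x) y))"
    using sum.reindex[OF inj, of "\<lambda>x. chi (inner x y)"] by simp
  also have "\<dots> = (\<Sum>x\<in>C. chi (inner x0 y) * chi (inner x y))"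
    by (rule sum.cong) (simp_all add: len x0 ly inner_vadd_left chi_radd)
  also have "\<dots> = - (\<Sum>x\<in>C. chi (inner x y))"
    by (simp add: chi_x0 sum_negf)
  finally show ?thesis using False by simp
qed

lemma prod_list_zip_mult:
  fixes f :: "'a \<Rightarrow> 'b \<Rightarrow> 'c::comm_monoid_mult"
  shows "length x = length y \<Longrightarrow>
    (\<Prod>(a, b)\<leftarrow>zip x y. f a b) * (\<Prod>b\<leftarrow>y. g b) = (\<Prod>(a, b)\<leftarrow>zip x y. f a b * g b)"
proof (induct x arbitrary: y)
  case Nil
  then show ?case by simp
next
  case (Cons a x)
  then obtain b y' where "y = b # y'" by (cases y) auto
  with Cons show ?case by (simp add: mult_ac)
qed

lemma sum_space_chi_inner_mult_prod_list:
  "length c = n \<Longrightarrow> (\<Sum>v\<in>space n. chi (inner c v) * (\<Prod>b\<leftarrow>v. m b)) =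
    (\<Prod>a\<leftarrow>c. \<Sum>r\<in>UNIV. chi (rmul a r) * m r)"
proof -
  assume "length c = n"
  then have "(\<Sum>v\<in>space n. chi (inner c v) * (\<Prod>b\<leftarrow>v. m b)) =
      (\<Sum>v | length v = length c. \<Prod>(a, b)\<leftarrow>zip c v. chi (rmul a b) * m b)"
    by (intro sum.cong) (auto simp: space_def chi_inner_eq_prod_list prod_list_zip_mult)
  then show ?thesis
    by (simp add: sum_length_lists_prod_list_zip[of "\<lambda>a b. chi (rmul a b) * m b"])
qed

lemma sum_dual_code_eq_sum_space:
  assumes C: "linear_code n C"
  shows "of_nat (card C) * (\<Sum>v\<in>dual_code n C. f v) =
    (\<Sum>v\<in>space n. (\<Sum>c\<in>C. chi (inner c v)) * f v)"
proof -
  have "(\<Sum>v\<in>dual_code n C. of_nat (card C) * f v) =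
      (\<Sum>v\<in>space n \<inter> dual_code n C. of_nat (card C) * f v)"
    by (simp add: Int_absorb1 dual_code_def subset_iff)
  also have "\<dots> = (\<Sum>v\<in>space n. if v \<in> dual_code n C then of_nat (card C) * f v else 0)"
    by (rule sum.inter_restrict[OF finite_space])
  also have "\<dots> = (\<Sum>v\<in>space n. (\<Sum>c\<in>C. chi (inner c v)) * f v)"
    by (rule sum.cong) (simp_all add: sum_chi_inner_code[OF C])
  finally show ?thesis by (simp add: sum_distrib_left)
qed

theorem macwilliams_complete:
  fixes m :: "R \<Rightarrow> complex"
  assumes C: "linear_code n C"
  shows "(\<Sum>v\<in>dual_code n C. \<Prod>b\<leftarrow>v. m b) =
    (\<Sum>c\<in>C. \<Prod>a\<leftarrow>c. \<Sum>r\<in>UNIV. chi (rmul a r) * m r) / of_nat (card C)"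
proof -
  have "card C \<noteq> 0"
    using C linear_code_finite[OF C] by (auto simp: linear_code_def)
  have "of_nat (card C) * (\<Sum>v\<in>dual_code n C. \<Prod>b\<leftarrow>v. m b) =
      (\<Sum>c\<in>C. \<Sum>v\<in>space n. chi (inner c v) * (\<Prod>b\<leftarrow>v. m b))"
    by (simp add: sum_dual_code_eq_sum_space[OF C] sum_distrib_right sum.swap[of _ C])
  also have "\<dots> = (\<Sum>c\<in>C. \<Prod>a\<leftarrow>c. \<Sum>r\<in>UNIV. chi (rmul a r) * m r)"
    using C by (intro sum.cong refl sum_space_chi_inner_mult_prod_list)
      (auto simp: linear_code_def space_def)
  finally show ?thesis
    using \<open>card C \<noteq> 0\<close> by (simp add: field_simps)
qed

lemma swe_dual_code:
  fixes X Y Z W S :: complex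
  assumes "linear_code n C"
  shows "swe (dual_code n C) X Y Z W S =
    swe C (6*S + 4*W + X + Y + 4*Z) (6*S - 4*W + X + Y - 4*Z)
      (-2*W + X - Y + 2*Z) (2*W + X - Y - 2*Z) (-2*S + X + Y) / of_nat (card C)"
  by (simp add: swe_eq_sum_prod_list macwilliams_complete[OF assms] sum_chi_mult_swe_weight)

theorem theorem3p7:
  fixes n :: nat and C :: "R list set" and X Y Z W S :: real
  assumes "linear_code n C"
  shows "swe (dual_code n C) X Y Z W S =
    (1 / real (card C)) *
      swe C (6*S + 4*W + X + Y + 4*Z) (6*S - 4*W + X + Y - 4*Z)
            (-2*W + X - Y + 2*Z) (2*W + X - Y - 2*Z) (-2*S + X + Y)"
proof -
  have "complex_of_real (swe (dual_code n C) X Y Z W S) =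
    complex_of_real ((1 / real (card C)) *
      swe C (6*S + 4*W + X + Y + 4*Z) (6*S - 4*W + X + Y - 4*Z)
            (-2*W + X - Y + 2*Z) (2*W + X - Y - 2*Z) (-2*S + X + Y))"
    by (simp add: of_real_swe swe_dual_code[OF assms])
  then show ?thesis
    by (simp only: of_real_eq_iff)
qed

end
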